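(* Let $\mathcal{H}$ be a complex Hilbert space and $X:=\mathcal{V}(\mathcal{H})_A\times(0,1)_L$ with the product topology. Let $\Gamma\underline{[0,1]}^{\succeq}$ be the set of functions $\gamma:\mathcal{V}(\mathcal{H})\to[0,1]$ with $\gamma(V')\geq\gamma(V)$ whenever $V'\subseteq V$, partially ordered pointwise. Define $\ell(\gamma)$, a truth value in $\mathrm{Sh}(X)$ (i.e. an open subset of $X$), as the union of the basic open sets ${\downarrow}V'\times(0,r')$ over all pairs $(V',r')$ with $V'\in\mathcal{V}(\mathcal{H})$, $r'\in(0,1]$ and $\gamma(V')\geq r'$. Then $\ell$ is injective, and for every family $(\gamma_i)_{i\in I}$ in $\Gamma\underline{[0,1]}^{\succeq}$ one has $\ell(\bigvee_i\gamma_i)=\bigvee_i\ell(\gamma_i)$, where $(\bigvee_i\gamma_i)(V)=\sup_i\gamma_i(V)$ and the join on the right is the join of truth values (union of open sets).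
   Context: $\mathcal{V}(\mathcal{H})$ is the poset, under inclusion, of non-trivial commutative von Neumann subalgebras of $B(\mathcal{H})$ containing the identity; $\mathcal{V}(\mathcal{H})_A$ is this poset with the topology whose open sets are the lower sets, and ${\downarrow}V:=\{V'\mid V'\subseteq V\}$. $(0,1)_L$ is the set $(0,1)$ with topology consisting of the sets $(0,r)$, $0\leq r\leq1$ (with $(0,0)=\emptyset$). The global elements of the subobject classifier of the sheaf topos $\mathrm{Sh}(X)$ are identified with the open subsets of $X$; equivalently $\ell(\gamma)$ assigns to each basic open $\langle V,r\rangle={\downarrow}V\times(0,r)$ the sieve $\{\langle V',r'\rangle\preceq\langle V,r\rangle\mid\gamma(V')\geq r'\}$, where $\langle V',r'\rangle\preceq\langle V,r\rangle$ iff $V'\subseteq V$ and $r'\leq r$. *)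

theory Defs
  imports Complex_Main
begin

text \<open>The poset V(H) is modelled by an arbitrary partially ordered type 'v
  (the order playing the role of inclusion).  Points of X = V(H)_A x (0,1)_L are
  pairs (V, r); truth values of Sh(X) are open subsets of X, i.e. sets of such pairs.\<close>

definition down :: "'v::order \<Rightarrow> 'v set" where
  "down V = {W. W \<le> V}"

definition Gamma_antitone :: "('v::order \<Rightarrow> real) set" where
  "Gamma_antitone = {\<gamma>. (\<forall>V. 0 \<le> \<gamma> V \<and> \<gamma> V \<le> 1) \<and>
                          (\<forall>V V'. V' \<le> V \<longrightarrow> \<gamma> V \<le> \<gamma> V')}"

definition ell :: "('v::order \<Rightarrow> real) \<Rightarrow> ('v \<times> real) set" where
  "ell \<gamma> = \<Union> {down V' \<times> {0<..<r'} | V' r'. r' \<in> {0<..1} \<and> \<gamma> V' \<ge> r'}"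

text \<open>Pointwise join in [0,1]; the join of the empty family is the bottom 0.\<close>
definition gamma_join :: "'i set \<Rightarrow> ('i \<Rightarrow> 'v \<Rightarrow> real) \<Rightarrow> 'v \<Rightarrow> real" where
  "gamma_join I g V = (if I = {} then 0 else (SUP i\<in>I. g i V))"

end

theory Submission
  imports Defs
begin

text \<open>Because \<gamma> is antitone and bounded by 1, the union defining \<open>ell \<gamma>\<close> is the open
  region strictly below the graph of \<gamma>; both claims then reduce to the density of the reals
  and to the fact that \<open>s < Sup\<close> means \<open>s\<close> lies below some member.\<close>

lemma Gamma_antitone_iff:
  "\<gamma> \<in> Gamma_antitone \<longleftrightarrow> (\<forall>V. 0 \<le> \<gamma> V \<and> \<gamma> V \<le> 1) \<and> antimono \<gamma>"
  unfolding Gamma_antitone_def antimono_def by blast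

lemma ell_eq_below_graph:
  fixes \<gamma> :: "'v::order \<Rightarrow> real"
  assumes "antimono \<gamma>" and "\<And>V. \<gamma> V \<le> 1"
  shows "ell \<gamma> = {(W, s). 0 < s \<and> s < \<gamma> W}"
proof (intro set_eqI iffI)
  fix p assume "p \<in> ell \<gamma>"
  then obtain V r where "p \<in> down V \<times> {0<..<r}" and "r \<le> \<gamma> V"
    unfolding ell_def by blast
  moreover obtain W s where p: "p = (W, s)" by fastforce
  ultimately have "W \<le> V" "0 < s" "s < r" by (auto simp: down_def)
  moreover have "\<gamma> V \<le> \<gamma> W" using \<open>W \<le> V\<close> by (rule antimonoD[OF assms(1)])
  ultimately show "p \<in> {(W, s). 0 < s \<and> s < \<gamma> W}" using p \<open>r \<le> \<gamma> V\<close> by simp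
next
  fix p assume "p \<in> {(W, s). 0 < s \<and> s < \<gamma> W}"
  then obtain W s where p: "p = (W, s)" "0 < s" "s < \<gamma> W" by blast
  then have "p \<in> down W \<times> {0<..<\<gamma> W}" and "\<gamma> W \<in> {0<..1}"
    using assms(2) by (auto simp: down_def)
  then show "p \<in> ell \<gamma>" unfolding ell_def by blast
qed

lemma ell_eq_below_graph_Gamma:
  "\<gamma> \<in> Gamma_antitone \<Longrightarrow> ell \<gamma> = {(W, s). 0 < s \<and> s < \<gamma> W}"
  by (simp add: Gamma_antitone_iff ell_eq_below_graph)

lemma nonneg_eq_if_same_positive_lower_bounds:
  fixes a b :: real
  assumes "0 \<le> a" "0 \<le> b" and "\<And>s. 0 < s \<Longrightarrow> s < a \<longleftrightarrow> s < b"
  shows "a = b"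
proof (rule ccontr)
  assume "a \<noteq> b"
  with assms(1,2) have "0 < (a + b) / 2" "(a + b) / 2 < a \<longleftrightarrow> \<not> (a + b) / 2 < b"
    by auto
  with assms(3) show False by blast
qed

lemma inj_on_ell_Gamma_antitone: "inj_on (ell :: ('v::order \<Rightarrow> real) \<Rightarrow> _) Gamma_antitone"
proof (rule inj_onI)
  fix f g :: "'v \<Rightarrow> real"
  assume f: "f \<in> Gamma_antitone" and g: "g \<in> Gamma_antitone" and "ell f = ell g"
  then have same: "0 < s \<and> s < f W \<longleftrightarrow> 0 < s \<and> s < g W" for W s
    by (simp add: ell_eq_below_graph_Gamma set_eq_iff)
  show "f = g"
  proof
    fix W
    show "f W = g W"
      using f g same by (intro nonneg_eq_if_same_positive_lower_bounds) (auto simp: Gamma_antitone_iff)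
  qed
qed

lemma gamma_join_in_Gamma_antitone:
  fixes g :: "'i \<Rightarrow> 'v::order \<Rightarrow> real"
  assumes "\<forall>i\<in>I. g i \<in> Gamma_antitone"
  shows "gamma_join I g \<in> Gamma_antitone"
proof (cases "I = {}")
  case True
  then show ?thesis by (simp add: gamma_join_def Gamma_antitone_iff antimono_def)
next
  case ne: False
  have bounds: "0 \<le> g i V" "g i V \<le> 1" if "i \<in> I" for i V
    using assms that by (auto simp: Gamma_antitone_iff)
  have bdd: "bdd_above ((\<lambda>i. g i V) ` I)" for V
    using bounds(2) by (rule bdd_aboveI2)
  obtain i where "i \<in> I" using ne by blast
  have "0 \<le> (SUP i\<in>I. g i V)" for V
    using cSUP_upper2[OF bdd \<open>i \<in> I\<close> bounds(1)[OF \<open>i \<in> I\<close>]] .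
  moreover have "(SUP i\<in>I. g i V) \<le> 1" for V
    using ne bounds(2) by (rule cSUP_least)
  moreover have "antimono (\<lambda>V. SUP i\<in>I. g i V)"
  proof (rule antimonoI)
    fix V W :: 'v
    assume "V \<le> W"
    then have "g i W \<le> g i V" if "i \<in> I" for i
      using assms that by (auto simp: Gamma_antitone_iff dest: antimonoD)
    then show "(SUP i\<in>I. g i W) \<le> (SUP i\<in>I. g i V)"
      using ne bdd[of V] by (intro cSUP_mono) auto
  qed
  moreover have "gamma_join I g = (\<lambda>V. SUP i\<in>I. g i V)"
    using ne by (simp add: gamma_join_def fun_eq_iff)
  ultimately show ?thesis by (simp add: Gamma_antitone_iff)
qed

lemma ell_gamma_join:
  assumes G: "\<forall>i\<in>I. g i \<in> Gamma_antitone"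
  shows "ell (gamma_join I g) = (\<Union>i\<in>I. ell (g i))"
proof (cases "I = {}")
  case True
  then show ?thesis by (auto simp: gamma_join_def ell_def)
next
  case ne: False
  have "bdd_above ((\<lambda>i. g i V) ` I)" for V
    using G by (intro bdd_aboveI2) (auto simp: Gamma_antitone_iff)
  then have below_join: "s < gamma_join I g W \<longleftrightarrow> (\<exists>i\<in>I. s < g i W)" for W s
    using ne by (simp add: gamma_join_def less_cSUP_iff)
  have "ell (gamma_join I g) = {(W, s). 0 < s \<and> s < gamma_join I g W}"
    by (rule ell_eq_below_graph_Gamma[OF gamma_join_in_Gamma_antitone[OF G]])
  also have "\<dots> = (\<Union>i\<in>I. {(W, s). 0 < s \<and> s < g i W})"
    by (auto simp: below_join)
  also have "\<dots> = (\<Union>i\<in>I. ell (g i))"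
    using G by (intro SUP_cong refl) (simp add: ell_eq_below_graph_Gamma)
  finally show ?thesis .
qed

theorem mainTheorem7:
  shows "inj_on (ell :: ('v::order \<Rightarrow> real) \<Rightarrow> _) Gamma_antitone \<and>
         (\<forall>(I :: 'i set) (g :: 'i \<Rightarrow> 'v \<Rightarrow> real).
            (\<forall>i\<in>I. g i \<in> Gamma_antitone) \<longrightarrow>
            ell (gamma_join I g) = (\<Union>i\<in>I. ell (g i)))"
  using inj_on_ell_Gamma_antitone ell_gamma_join by blast

end
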